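(* Let $S$ be a Hausdorff semitopological semigroup which is an orthogonal sum $S=\sum_{i\in\mathscr I}B^0_{\lambda_i}(S_i)$ of topological Brandt $\lambda_i^0$-extensions of semitopological monoids $S_i$ with zeros. Then for every $i\in\mathscr I$, all $\alpha_i,\beta_i\in\lambda_i$ and every non-zero element $(\alpha_i,g_i,\beta_i)\in (S_i)_{\alpha_i,\beta_i}$ there exists an open neighbourhood $U$ of $(\alpha_i,g_i,\beta_i)$ in $S$ with $U\subseteq (S_i)^*_{\alpha_i,\beta_i}$. Consequently every set $(S_i)^*_{\alpha_i,\beta_i}$ is open in $S$.
   Context: All topological spaces are Hausdorff. A semitopological semigroup is a Hausdorff space with a separately continuous associative operation. For a semigroup $T$ with zero $0_T$ and a cardinal $\lambda\ge1$, the Brandt $\lambda^0$-extension $B^0_\lambda(T)$ is the set $(\lambda\times (T\setminus\{0_T\})\times\lambda)\cup\{0\}$ with multiplication $(\alpha,a,\beta)(\gamma,b,\delta)=(\alpha,ab,\delta)$ if $\beta=\gamma$ and $ab\ne0_T$, and $=0$ otherwise, with $0$ a zero. For $A\subseteq T$ and $\alpha,\beta\in\lambda$, $A_{\alpha,\beta}=\{(\alpha,s,\beta):s\in A\setminus\{0_T\}\}\cup\{0\}$ if $0_T\in A$, and $A_{\alpha,\beta}=\{(\alpha,s,\beta):s\in A\}$ otherwise; for a subset $B$ of a semigroup with zero, $B^*=B\setminus\{0\}$. If $T$ is a semitopological monoid with zero, a topological Brandt $\lambda^0$-extension of $T$ is $B^0_\lambda(T)$ with a topology making it a semitopological semigroup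 such that for some $\alpha\in\lambda$ the map $s\mapsto(\alpha,s,\alpha)$ ($0_T\mapsto 0$) is a homeomorphism of $T$ onto the subspace $T_{\alpha,\alpha}$. The orthogonal sum $\sum_{\iota}T_\iota$ of a disjoint family of semigroups $T_\iota$ with zeros is the set $\{0\}\cup\bigcup_\iota T_\iota^*$ where $st$ is the product in $T_\iota$ if $s,t\in T_\iota^*$ and this product is non-zero, and $st=0$ otherwise. *)

theory Defs
  imports "HOL-Analysis.Analysis"
begin

text \<open>Elements of an orthogonal sum of Brandt extensions: the zero, or a triple
  (alpha, s, beta) belonging to the summand with index i.\<close>
datatype ('i, 'l, 's) bel = BZero | BEl 'i 'l 's 'l

definition semitop_semigroup :: "'a set \<Rightarrow> ('a \<Rightarrow> 'a \<Rightarrow> 'a) \<Rightarrow> 'a topology \<Rightarrow> bool" where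
  "semitop_semigroup X f T \<longleftrightarrow>
     topspace T = X \<and> Hausdorff_space T \<and>
     (\<forall>x\<in>X. \<forall>y\<in>X. f x y \<in> X) \<and>
     (\<forall>x\<in>X. \<forall>y\<in>X. \<forall>w\<in>X. f (f x y) w = f x (f y w)) \<and>
     (\<forall>a\<in>X. continuous_map T T (\<lambda>x. f a x) \<and> continuous_map T T (\<lambda>x. f x a))"

definition semitop_monoid_zero :: "'a set \<Rightarrow> ('a \<Rightarrow> 'a \<Rightarrow> 'a) \<Rightarrow> 'a \<Rightarrow> 'a \<Rightarrow> 'a topology \<Rightarrow> bool" where
  "semitop_monoid_zero X f z e T \<longleftrightarrow>
     semitop_semigroup X f T \<and> z \<in> X \<and> e \<in> X \<and>
     (\<forall>x\<in>X. f z x = z \<and> f x z = z) \<and>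
     (\<forall>x\<in>X. f e x = x \<and> f x e = x)"

definition osum_carrier :: "'i set \<Rightarrow> ('i \<Rightarrow> 'l set) \<Rightarrow> ('i \<Rightarrow> 's set) \<Rightarrow> ('i \<Rightarrow> 's)
    \<Rightarrow> ('i, 'l, 's) bel set" where
  "osum_carrier I Lam M z = insert BZero
     {BEl i a s b | i a s b. i \<in> I \<and> a \<in> Lam i \<and> b \<in> Lam i \<and> s \<in> M i - {z i}}"

fun osum_mult :: "('i \<Rightarrow> 's \<Rightarrow> 's \<Rightarrow> 's) \<Rightarrow> ('i \<Rightarrow> 's)
    \<Rightarrow> ('i, 'l, 's) bel \<Rightarrow> ('i, 'l, 's) bel \<Rightarrow> ('i, 'l, 's) bel" where
  "osum_mult mul z (BEl i a s b) (BEl j c t d) =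
     (if i = j \<and> b = c \<and> mul i s t \<noteq> z i then BEl i a (mul i s t) d else BZero)"
| "osum_mult mul z BZero y = BZero"
| "osum_mult mul z x BZero = BZero"

text \<open>(S_i)_{alpha,beta} (contains the zero, since 0 of S_i lies in S_i).\<close>
definition bset :: "('i \<Rightarrow> 's set) \<Rightarrow> ('i \<Rightarrow> 's) \<Rightarrow> 'i \<Rightarrow> 'l \<Rightarrow> 'l \<Rightarrow> ('i, 'l, 's) bel set" where
  "bset M z i a b = insert BZero {BEl i a s b | s. s \<in> M i - {z i}}"

definition bset_star :: "('i \<Rightarrow> 's set) \<Rightarrow> ('i \<Rightarrow> 's) \<Rightarrow> 'i \<Rightarrow> 'l \<Rightarrow> 'l \<Rightarrow> ('i, 'l, 's) bel set" where
  "bset_star M z i a b = {BEl i a s b | s. s \<in> M i - {z i}}"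

end

theory Submission
  imports Defs
begin

text \<open>Write \<open>E\<^sub>\<alpha> = (\<alpha>, 1, \<alpha>)\<close> for the idempotents built from the identity of \<open>S\<^sub>i\<close>. The map
  \<open>x \<mapsto> E\<^sub>\<alpha> x E\<^sub>\<beta>\<close> is continuous by separate continuity, fixes every element of
  \<open>(S\<^sub>i)\<^sup>*\<^sub>\<alpha>\<^sub>,\<^sub>\<beta>\<close> and sends everything else to the zero. Hence \<open>(S\<^sub>i)\<^sup>*\<^sub>\<alpha>\<^sub>,\<^sub>\<beta>\<close> is the
  preimage of the complement of the closed point \<open>0\<close>, which is open.\<close>

lemma openin_preimage_Compl_point:
  assumes "t1_space Y" "continuous_map X Y f" "c \<in> topspace Y"
  shows "openin X {x \<in> topspace X. f x \<noteq> c}"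
proof -
  have "closedin X {x \<in> topspace X. f x \<in> {c}}"
    using assms by (intro closedin_continuous_map_preimage closedin_t1_singleton)
  moreover have "{x \<in> topspace X. f x \<noteq> c} = topspace X - {x \<in> topspace X. f x \<in> {c}}"
    by blast
  ultimately show ?thesis
    by (simp add: openin_diff)
qed

lemma semitop_semigroup_continuous_map_sandwich:
  assumes "semitop_semigroup X f T" "a \<in> X" "b \<in> X"
  shows "continuous_map T T (\<lambda>x. f (f a x) b)"
proof -
  have "continuous_map T T (f a)" "continuous_map T T (\<lambda>x. f x b)"
    using assms unfolding semitop_semigroup_def by auto
  then show ?thesis
    using continuous_map_compose[of T T "f a" T "\<lambda>x. f x b"] by (simp add: o_def)
qed

lemma semitop_monoid_zero_one_neq_zero:
  assumes "semitop_monoid_zero X f z e T" "g \<in> X - {z}"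
  shows "e \<noteq> z"
proof
  assume "e = z"
  have "g = f e g" "f z g = z"
    using assms unfolding semitop_monoid_zero_def by auto
  with \<open>e = z\<close> have "g = z"
    by simp
  then show False
    using assms(2) by simp
qed

lemma osum_mult_sandwich_idempotents:
  assumes "\<forall>s\<in>M i. mul i u s = s \<and> mul i s u = s"
    and "y \<in> osum_carrier I Lam M z"
  shows "osum_mult mul z (osum_mult mul z (BEl i a u a) y) (BEl i b u b)
           = (if y \<in> bset_star M z i a b then y else BZero)"
  using assms unfolding osum_carrier_def bset_star_def
  by (cases y) auto

lemma bset_star_subset_osum_carrier:
  assumes "i \<in> I" "a \<in> Lam i" "b \<in> Lam i"
  shows "bset_star M z i a b \<subseteq> osum_carrier I Lam M z"
  using assms unfolding bset_star_def osum_carrier_def by blast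

theorem proposition2p2:
  fixes I :: "'i set" and Lam :: "'i \<Rightarrow> 'l set"
    and M :: "'i \<Rightarrow> 's set" and mul :: "'i \<Rightarrow> 's \<Rightarrow> 's \<Rightarrow> 's"
    and z e :: "'i \<Rightarrow> 's" and T :: "'i \<Rightarrow> 's topology"
    and TS :: "('i, 'l, 's) bel topology"
  assumes monoids: "\<And>i. i \<in> I \<Longrightarrow> semitop_monoid_zero (M i) (mul i) (z i) (e i) (T i)"
    and lam_ne: "\<And>i. i \<in> I \<Longrightarrow> Lam i \<noteq> {}"
    and S: "semitop_semigroup (osum_carrier I Lam M z) (osum_mult mul z) TS"
    and brandt: "\<And>i. i \<in> I \<Longrightarrow> \<exists>a\<in>Lam i.
         homeomorphic_map (T i) (subtopology TS (bset M z i a a))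
           (\<lambda>s. if s = z i then BZero else BEl i a s a)"
  shows "\<forall>i\<in>I. \<forall>a\<in>Lam i. \<forall>b\<in>Lam i.
           (\<forall>g\<in>M i - {z i}. \<exists>U. openin TS U \<and> BEl i a g b \<in> U \<and> U \<subseteq> bset_star M z i a b)
           \<and> openin TS (bset_star M z i a b)"
proof (intro ballI)
  fix i a b assume i: "i \<in> I" and a: "a \<in> Lam i" and b: "b \<in> Lam i"
  let ?C = "osum_carrier I Lam M z" and ?m = "osum_mult mul z"
  let ?sandwich = "\<lambda>y. ?m (?m (BEl i a (e i) a) y) (BEl i b (e i) b)"
  have top: "topspace TS = ?C" and t1: "t1_space TS"
    using S by (auto simp: semitop_semigroup_def Hausdorff_imp_t1_space)
  have unit: "\<forall>s\<in>M i. mul i (e i) s = s \<and> mul i s (e i) = s" "e i \<in> M i"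
    using monoids[OF i] unfolding semitop_monoid_zero_def by auto
  have "openin TS (bset_star M z i a b)"
  proof (cases "M i - {z i} = {}")
    case True
    then have "bset_star M z i a b = {}"
      unfolding bset_star_def by blast
    then show ?thesis by simp
  next
    case False
    then have "e i \<noteq> z i"
      using semitop_monoid_zero_one_neq_zero[OF monoids[OF i]] by blast
    then have "BEl i a (e i) a \<in> ?C" "BEl i b (e i) b \<in> ?C"
      using i a b unit(2) unfolding osum_carrier_def by auto
    then have "continuous_map TS TS ?sandwich"
      by (rule semitop_semigroup_continuous_map_sandwich[OF S])
    moreover have "BZero \<in> topspace TS"
      unfolding top osum_carrier_def by simp
    ultimately have "openin TS {y \<in> topspace TS. ?sandwich y \<noteq> BZero}"
      by (rule openin_preimage_Compl_point[OF t1])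
    moreover have "{y \<in> topspace TS. ?sandwich y \<noteq> BZero} = bset_star M z i a b"
    proof -
      have "?sandwich y = (if y \<in> bset_star M z i a b then y else BZero)" if "y \<in> topspace TS" for y
        using that unfolding top by (rule osum_mult_sandwich_idempotents[where M = M and mul = mul and i = i, OF unit(1)])
      moreover have "BZero \<notin> bset_star M z i a b"
        unfolding bset_star_def by blast
      ultimately show ?thesis
        using bset_star_subset_osum_carrier[where M = M and z = z and Lam = Lam and i = i, OF i a b]
        unfolding top by (auto split: if_splits)
    qed
    ultimately show ?thesis by simp
  qed
  then show "(\<forall>g\<in>M i - {z i}. \<exists>U. openin TS U \<and> BEl i a g b \<in> U \<and> U \<subseteq> bset_star M z i a b)
           \<and> openin TS (bset_star M z i a b)"
    unfolding bset_star_def by blast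
qed

end
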